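(* For any simplicial models $\mathcal{C}$, $\mathcal{D}$ with facets $F\in\mathcal{F}(C^{\mathcal C})$, $G\in\mathcal{F}(C^{\mathcal D})$, if $\mathcal{C},F$ and $\mathcal{D},G$ are bisimilar then they are $\mathcal{L}$-logically equivalent. Likewise, for any first-order Kripke models $\mathcal{M},\mathcal{N}$ with worlds $w\in W^{\mathcal M}$, $v\in W^{\mathcal N}$, if $\mathcal{M},w$ and $\mathcal{N},v$ are bisimilar then they are $\mathcal{L}$-logically equivalent.
   Context: Fix a nonempty finite set $\mathbf{A}$ of agents, a countable set $\mathbf{X}$ of variables with $\mathbf{A}\cap\mathbf{X}=\emptyset$, and a countable set $\mathbf{P}$ of unary predicate letters. Formulas of $\mathcal{L}$ and their free variables are defined simultaneously: $\phi ::= p_x \mid \top \mid \neg\phi \mid (\phi\wedge\phi) \mid [x:=a]\phi \mid \mathsf{K}_X\alpha$, where $p\in\mathbf{P}$, $x\in\mathbf{X}$, $a\in\mathbf{A}$, $X\subseteq\mathbf{X}$ is finite (possibly empty) and $\alpha$ is a formula with $FV(\alpha)=\emptyset$; $FV(p_x)=\{x\}$, $FV(\top)=\emptyset$, $FV(\neg\phi)=FV(\phi)$, $FV(\phi\wedge\psi)=FV(\phi)\cup FV(\psi)$, $FV([x:=a]\phi)=FV(\phi)\setminus\{x\}$, $FV(\mathsf{K}_X\alpha)=X$. Formulas without free variables are sentences. A simplicial model is $\mathcal{C}=(\mathcal{V},C,\chi,\ell)$ with $\mathcal{V}\neq\emptyset$, $C\subseteq\wp(\mathcal{V})$ such that $\emptyset\notin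 C$, $C$ is closed under nonempty subsets and contains every singleton; $\chi:\mathcal{V}\to\mathbf{A}$ is injective on every member of $C$; $\ell:\mathbf{P}\to\wp(\mathcal{V})$. The facets $\mathcal{F}(C)$ are the inclusion-maximal elements of $C$. A first-order Kripke model is $\mathcal{M}=(W,\delta,\{R_a\}_{a\in\mathbf{A}},\rho)$ with $W\neq\emptyset$, $\delta:W\to\wp(\mathbf{A})\setminus\{\emptyset\}$, $R_a\subseteq W\times W$ with $R_a(w)=\emptyset$ whenever $a\notin\delta(w)$, and $\rho:\mathbf{P}\times W\to\wp(\mathbf{A})$ with $\rho(p,w)\subseteq\delta(w)$. An assignment $\sigma:\mathbf{X}\to\mathbf{A}$ is admissible for $\mathcal{C},F,\phi$ if $\sigma[FV(\phi)]\subseteq\chi[F]$, and for $\mathcal{M},w,\phi$ if $\sigma[FV(\phi)]\subseteq\delta(w)$. Satisfaction is defined for admissible assignments (Boolean clauses standard): $\mathcal{C},F,\sigma\Vdash p_x$ iff $\sigma(x)\in\chi[F\cap\ell(p)]$; $\mathcal{C},F,\sigma\Vdash[x:=a]\phi$ iff ($a\in\chi[F]$ implies $\mathcal{C},F,\sigma[x\mapsto a]\Vdash\phi$); $\mathcal{C},F,\sigma\Vdash\mathsf{K}_X\alpha$ iff for all $G\in\mathcal{F}(C)$ with $\sigma[X]\subseteq\chi[F\cap G]$, $\mathcal{C},G,\sigma\Vdash\alpha$. $\mathcal{M},w,\sigma\vDash p_x$ iff $\sigma(x)\in\rho(p,w)$; $\mathcal{M},w,\sigma\vDash[x:=a]\phi$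 iff ($a\in\delta(w)$ implies $\mathcal{M},w,\sigma[x\mapsto a]\vDash\phi$); $\mathcal{M},w,\sigma\vDash\mathsf{K}_X\alpha$ iff for all $v\in\bigcap_{a\in\sigma[X]}R_a(w)$ (the empty intersection being $W$), $\mathcal{M},v,\sigma\vDash\alpha$. Truth of a sentence is independent of the assignment. Two pointed models (of the same kind) are $\mathcal{L}$-logically equivalent if they satisfy exactly the same sentences. A bisimulation between simplicial models $\mathcal{C},\mathcal{D}$ is $Z\subseteq\mathcal{F}(C^{\mathcal C})\times\mathcal{F}(C^{\mathcal D})$ such that for all $(F,G)\in Z$: (Inv) $\chi^{\mathcal C}[F]=\chi^{\mathcal D}[G]$ and $\chi^{\mathcal C}[F\cap\ell^{\mathcal C}(p)]=\chi^{\mathcal D}[G\cap\ell^{\mathcal D}(p)]$ for all $p$; (Zig) for all $A\subseteq\mathbf{A}$ and facets $F'$ of $\mathcal{C}$ with $A\subseteq\chi^{\mathcal C}[F\cap F']$ there is a facet $G'$ of $\mathcal{D}$ with $A\subseteq\chi^{\mathcal D}[G\cap G']$ and $(F',G')\in Z$; (Zag) the symmetric condition. A bisimulation between first-order Kripke models $\mathcal{M},\mathcal{N}$ is $Z\subseteq W^{\mathcal M}\times W^{\mathcal N}$ such that for all $(w,v)\in Z$: (Inv) $\delta^{\mathcal M}(w)=\delta^{\mathcal N}(v)$ and $\rho^{\mathcal M}(p,w)=\rho^{\mathcal N}(p,v)$ for all $p$; (Zig) for all $A\subseteq\mathbf{A}$ and $w'\in\bigcap_{a\in A}R^{\mathcal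 M}_a(w)$ there is $v'\in\bigcap_{a\in A}R^{\mathcal N}_a(v)$ with $(w',v')\in Z$; (Zag) symmetric. Pointed models are bisimilar if some bisimulation relates the points. *)

theory Defs
  imports Main "HOL-Library.Countable"
begin

text \<open>Agents: type 'a (finite, nonempty since types are nonempty);
 variables: type 'x (countable); unary predicate letters: type 'p (countable).
 Agents and variables live in different types, hence are disjoint.\<close>

datatype ('a, 'x, 'p) form =
    Pred 'p 'x
  | Top
  | Neg "('a, 'x, 'p) form"
  | Conj "('a, 'x, 'p) form" "('a, 'x, 'p) form"
  | Assign 'x 'a "('a, 'x, 'p) form"
  | Know "'x set" "('a, 'x, 'p) form"

fun FV :: "('a, 'x, 'p) form \<Rightarrow> 'x set" where
  "FV (Pred p x) = {x}"
| "FV Top = {}"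
| "FV (Neg \<phi>) = FV \<phi>"
| "FV (Conj \<phi> \<psi>) = FV \<phi> \<union> FV \<psi>"
| "FV (Assign x a \<phi>) = FV \<phi> - {x}"
| "FV (Know X \<alpha>) = X"

fun wf_form :: "('a, 'x, 'p) form \<Rightarrow> bool" where
  "wf_form (Pred p x) = True"
| "wf_form Top = True"
| "wf_form (Neg \<phi>) = wf_form \<phi>"
| "wf_form (Conj \<phi> \<psi>) = (wf_form \<phi> \<and> wf_form \<psi>)"
| "wf_form (Assign x a \<phi>) = wf_form \<phi>"
| "wf_form (Know X \<alpha>) = (finite X \<and> FV \<alpha> = {} \<and> wf_form \<alpha>)"

definition sentence :: "('a, 'x, 'p) form \<Rightarrow> bool" where
  "sentence \<phi> \<longleftrightarrow> wf_form \<phi> \<and> FV \<phi> = {}"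

record ('v, 'a, 'p) smodel =
  verts :: "'v set"
  cplx :: "'v set set"
  chi :: "'v \<Rightarrow> 'a"
  lab :: "'p \<Rightarrow> 'v set"

definition simplicial_model :: "('v, 'a, 'p) smodel \<Rightarrow> bool" where
  "simplicial_model S \<longleftrightarrow>
     verts S \<noteq> {} \<and>
     cplx S \<subseteq> Pow (verts S) \<and>
     {} \<notin> cplx S \<and>
     (\<forall>X\<in>cplx S. \<forall>Y. Y \<subseteq> X \<and> Y \<noteq> {} \<longrightarrow> Y \<in> cplx S) \<and>
     (\<forall>v\<in>verts S. {v} \<in> cplx S) \<and>
     (\<forall>X\<in>cplx S. inj_on (chi S) X) \<and>
     (\<forall>p. lab S p \<subseteq> verts S)"

definition facets :: "('v, 'a, 'p) smodel \<Rightarrow> 'v set set" where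
  "facets S = {F \<in> cplx S. \<forall>G\<in>cplx S. F \<subseteq> G \<longrightarrow> G = F}"

fun ssat :: "('v, 'a, 'p) smodel \<Rightarrow> 'v set \<Rightarrow> ('x \<Rightarrow> 'a) \<Rightarrow> ('a, 'x, 'p) form \<Rightarrow> bool" where
  "ssat S F \<sigma> (Pred p x) = (\<sigma> x \<in> chi S ` (F \<inter> lab S p))"
| "ssat S F \<sigma> Top = True"
| "ssat S F \<sigma> (Neg \<phi>) = (\<not> ssat S F \<sigma> \<phi>)"
| "ssat S F \<sigma> (Conj \<phi> \<psi>) = (ssat S F \<sigma> \<phi> \<and> ssat S F \<sigma> \<psi>)"
| "ssat S F \<sigma> (Assign x a \<phi>) = (a \<in> chi S ` F \<longrightarrow> ssat S F (\<sigma>(x := a)) \<phi>)"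
| "ssat S F \<sigma> (Know X \<alpha>) =
     (\<forall>G\<in>facets S. \<sigma> ` X \<subseteq> chi S ` (F \<inter> G) \<longrightarrow> ssat S G \<sigma> \<alpha>)"

definition s_bisimulation ::
  "('v1, 'a, 'p) smodel \<Rightarrow> ('v2, 'a, 'p) smodel \<Rightarrow> ('v1 set \<times> 'v2 set) set \<Rightarrow> bool" where
  "s_bisimulation C D Z \<longleftrightarrow>
     Z \<subseteq> facets C \<times> facets D \<and>
     (\<forall>(F, G)\<in>Z.
        chi C ` F = chi D ` G \<and>
        (\<forall>p. chi C ` (F \<inter> lab C p) = chi D ` (G \<inter> lab D p)) \<and>
        (\<forall>A F'. F' \<in> facets C \<and> A \<subseteq> chi C ` (F \<inter> F') \<longrightarrow>
            (\<exists>G'\<in>facets D. A \<subseteq> chi D ` (G \<inter> G') \<and> (F', G') \<in> Z)) \<and>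
        (\<forall>A G'. G' \<in> facets D \<and> A \<subseteq> chi D ` (G \<inter> G') \<longrightarrow>
            (\<exists>F'\<in>facets C. A \<subseteq> chi C ` (F \<inter> F') \<and> (F', G') \<in> Z)))"

definition s_bisimilar ::
  "('v1, 'a, 'p) smodel \<Rightarrow> 'v1 set \<Rightarrow> ('v2, 'a, 'p) smodel \<Rightarrow> 'v2 set \<Rightarrow> bool" where
  "s_bisimilar C F D G \<longleftrightarrow> (\<exists>Z. s_bisimulation C D Z \<and> (F, G) \<in> Z)"

text \<open>Logical equivalence w.r.t. sentences of L (variables of type 'x);
 truth of a sentence does not depend on the assignment.\<close>
definition s_lequiv ::
  "'x itself \<Rightarrow> ('v1, 'a, 'p) smodel \<Rightarrow> 'v1 set \<Rightarrow> ('v2, 'a, 'p) smodel \<Rightarrow> 'v2 set \<Rightarrow> bool" where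
  "s_lequiv _ C F D G \<longleftrightarrow>
     (\<forall>(\<phi> :: ('a, 'x, 'p) form) (\<sigma> :: 'x \<Rightarrow> 'a). sentence \<phi> \<longrightarrow>
        (ssat C F \<sigma> \<phi> \<longleftrightarrow> ssat D G \<sigma> \<phi>))"

record ('w, 'a, 'p) kmodel =
  worlds :: "'w set"
  dom :: "'w \<Rightarrow> 'a set"
  rel :: "'a \<Rightarrow> 'w \<Rightarrow> 'w set"
  rho :: "'p \<Rightarrow> 'w \<Rightarrow> 'a set"

definition kripke_model :: "('w, 'a, 'p) kmodel \<Rightarrow> bool" where
  "kripke_model M \<longleftrightarrow>
     worlds M \<noteq> {} \<and>
     (\<forall>w\<in>worlds M. dom M w \<noteq> {}) \<and>
     (\<forall>a w. rel M a w \<subseteq> worlds M) \<and>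
     (\<forall>a w. w \<notin> worlds M \<longrightarrow> rel M a w = {}) \<and>
     (\<forall>a. \<forall>w\<in>worlds M. a \<notin> dom M w \<longrightarrow> rel M a w = {}) \<and>
     (\<forall>p. \<forall>w\<in>worlds M. rho M p w \<subseteq> dom M w)"

text \<open>Intersection of the R_a(w) over a in A; for A empty this is W.\<close>
definition inter_rel :: "('w, 'a, 'p) kmodel \<Rightarrow> 'a set \<Rightarrow> 'w \<Rightarrow> 'w set" where
  "inter_rel M A w = {v \<in> worlds M. \<forall>a\<in>A. v \<in> rel M a w}"

fun ksat :: "('w, 'a, 'p) kmodel \<Rightarrow> 'w \<Rightarrow> ('x \<Rightarrow> 'a) \<Rightarrow> ('a, 'x, 'p) form \<Rightarrow> bool" where
  "ksat M w \<sigma> (Pred p x) = (\<sigma> x \<in> rho M p w)"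
| "ksat M w \<sigma> Top = True"
| "ksat M w \<sigma> (Neg \<phi>) = (\<not> ksat M w \<sigma> \<phi>)"
| "ksat M w \<sigma> (Conj \<phi> \<psi>) = (ksat M w \<sigma> \<phi> \<and> ksat M w \<sigma> \<psi>)"
| "ksat M w \<sigma> (Assign x a \<phi>) = (a \<in> dom M w \<longrightarrow> ksat M w (\<sigma>(x := a)) \<phi>)"
| "ksat M w \<sigma> (Know X \<alpha>) = (\<forall>v\<in>inter_rel M (\<sigma> ` X) w. ksat M v \<sigma> \<alpha>)"

definition k_bisimulation ::
  "('w1, 'a, 'p) kmodel \<Rightarrow> ('w2, 'a, 'p) kmodel \<Rightarrow> ('w1 \<times> 'w2) set \<Rightarrow> bool" where
  "k_bisimulation M N Z \<longleftrightarrow>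
     Z \<subseteq> worlds M \<times> worlds N \<and>
     (\<forall>(w, v)\<in>Z.
        dom M w = dom N v \<and>
        (\<forall>p. rho M p w = rho N p v) \<and>
        (\<forall>A. \<forall>w'\<in>inter_rel M A w. \<exists>v'\<in>inter_rel N A v. (w', v') \<in> Z) \<and>
        (\<forall>A. \<forall>v'\<in>inter_rel N A v. \<exists>w'\<in>inter_rel M A w. (w', v') \<in> Z))"

definition k_bisimilar ::
  "('w1, 'a, 'p) kmodel \<Rightarrow> 'w1 \<Rightarrow> ('w2, 'a, 'p) kmodel \<Rightarrow> 'w2 \<Rightarrow> bool" where
  "k_bisimilar M w N v \<longleftrightarrow> (\<exists>Z. k_bisimulation M N Z \<and> (w, v) \<in> Z)"

definition k_lequiv ::
  "'x itself \<Rightarrow> ('w1, 'a, 'p) kmodel \<Rightarrow> 'w1 \<Rightarrow> ('w2, 'a, 'p) kmodel \<Rightarrow> 'w2 \<Rightarrow> bool" where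
  "k_lequiv _ M w N v \<longleftrightarrow>
     (\<forall>(\<phi> :: ('a, 'x, 'p) form) (\<sigma> :: 'x \<Rightarrow> 'a). sentence \<phi> \<longrightarrow>
        (ksat M w \<sigma> \<phi> \<longleftrightarrow> ksat N v \<sigma> \<phi>))"

end

theory Submission
  imports Defs
begin

text \<open>A bisimulation preserves the truth of every formula under every assignment, not only
  of sentences, so the theorem follows by induction on formulas. The invariance clause takes
  care of atoms and of \<open>[x:=a]\<close>, whose guard only asks which agents are present.
  For \<open>K\<^sub>X \<alpha>\<close>, the Zag clause with \<open>A = \<sigma>[X]\<close> matches every facet (world) that has
  to be checked on the right with a bisimilar one on the left, where \<open>\<alpha>\<close> holds by
  assumption; Zig gives the converse direction.\<close>

lemma s_bisimulationD:
  assumes "s_bisimulation C D Z" and "(F, G) \<in> Z"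
  shows "chi C ` F = chi D ` G"
    and "chi C ` (F \<inter> lab C p) = chi D ` (G \<inter> lab D p)"
    and "F' \<in> facets C \<Longrightarrow> A \<subseteq> chi C ` (F \<inter> F') \<Longrightarrow>
           \<exists>G'\<in>facets D. A \<subseteq> chi D ` (G \<inter> G') \<and> (F', G') \<in> Z"
    and "G' \<in> facets D \<Longrightarrow> A \<subseteq> chi D ` (G \<inter> G') \<Longrightarrow>
           \<exists>F'\<in>facets C. A \<subseteq> chi C ` (F \<inter> F') \<and> (F', G') \<in> Z"
  using assms(1)[unfolded s_bisimulation_def, THEN conjunct2, THEN bspec, OF assms(2)]
  by simp_all

lemma k_bisimulationD:
  assumes "k_bisimulation M N Z" and "(w, v) \<in> Z"
  shows "dom M w = dom N v"
    and "rho M p w = rho N p v"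
    and "w' \<in> inter_rel M A w \<Longrightarrow> \<exists>v'\<in>inter_rel N A v. (w', v') \<in> Z"
    and "v' \<in> inter_rel N A v \<Longrightarrow> \<exists>w'\<in>inter_rel M A w. (w', v') \<in> Z"
  using assms(1)[unfolded k_bisimulation_def, THEN conjunct2, THEN bspec, OF assms(2)]
  by simp_all

lemma ssat_Know_transfer:
  assumes "\<And>G'. G' \<in> facets D \<Longrightarrow> \<sigma> ` X \<subseteq> chi D ` (G \<inter> G') \<Longrightarrow>
             \<exists>F'\<in>facets C. \<sigma> ` X \<subseteq> chi C ` (F \<inter> F') \<and> R F' G'"
    and "\<And>F' G'. R F' G' \<Longrightarrow> ssat C F' \<sigma> \<alpha> \<Longrightarrow> ssat D G' \<sigma> \<alpha>"
    and "ssat C F \<sigma> (Know X \<alpha>)"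
  shows "ssat D G \<sigma> (Know X \<alpha>)"
  using assms by fastforce

lemma ksat_Know_transfer:
  assumes "\<And>v'. v' \<in> inter_rel N (\<sigma> ` X) v \<Longrightarrow> \<exists>w'\<in>inter_rel M (\<sigma> ` X) w. R w' v'"
    and "\<And>w' v'. R w' v' \<Longrightarrow> ksat M w' \<sigma> \<alpha> \<Longrightarrow> ksat N v' \<sigma> \<alpha>"
    and "ksat M w \<sigma> (Know X \<alpha>)"
  shows "ksat N v \<sigma> (Know X \<alpha>)"
  using assms by fastforce

lemma s_bisimulation_ssat_iff:
  assumes Z: "s_bisimulation C D Z" and "(F, G) \<in> Z"
  shows "ssat C F \<sigma> \<phi> \<longleftrightarrow> ssat D G \<sigma> \<phi>"
  using assms(2)
proof (induction \<phi> arbitrary: F G \<sigma>)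
  case (Pred p x)
  show ?case using s_bisimulationD(2)[OF Z Pred.prems] by simp
next
  case (Assign x a \<phi>)
  show ?case using s_bisimulationD(1)[OF Z Assign.prems] Assign.IH[OF Assign.prems]
    by (simp add: fun_upd_def)
next
  case (Know X \<alpha>)
  have "ssat D G \<sigma> (Know X \<alpha>)" if "ssat C F \<sigma> (Know X \<alpha>)"
    by (rule ssat_Know_transfer[where R = "\<lambda>F' G'. (F', G') \<in> Z", OF _ _ that])
      (erule (1) s_bisimulationD(4)[OF Z Know.prems], erule (1) Know.IH[THEN iffD1])
  moreover have "ssat C F \<sigma> (Know X \<alpha>)" if "ssat D G \<sigma> (Know X \<alpha>)"
    by (rule ssat_Know_transfer[where R = "\<lambda>G' F'. (F', G') \<in> Z", OF _ _ that])
      (erule (1) s_bisimulationD(3)[OF Z Know.prems], erule (1) Know.IH[THEN iffD2])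
  ultimately show ?case by blast
qed simp_all

lemma k_bisimulation_ksat_iff:
  assumes Z: "k_bisimulation M N Z" and "(w, v) \<in> Z"
  shows "ksat M w \<sigma> \<phi> \<longleftrightarrow> ksat N v \<sigma> \<phi>"
  using assms(2)
proof (induction \<phi> arbitrary: w v \<sigma>)
  case (Pred p x)
  show ?case using k_bisimulationD(2)[OF Z Pred.prems] by simp
next
  case (Assign x a \<phi>)
  show ?case using k_bisimulationD(1)[OF Z Assign.prems] Assign.IH[OF Assign.prems]
    by (simp add: fun_upd_def)
next
  case (Know X \<alpha>)
  have "ksat N v \<sigma> (Know X \<alpha>)" if "ksat M w \<sigma> (Know X \<alpha>)"
    by (rule ksat_Know_transfer[where R = "\<lambda>w' v'. (w', v') \<in> Z", OF _ _ that])
      (erule k_bisimulationD(4)[OF Z Know.prems], erule (1) Know.IH[THEN iffD1])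
  moreover have "ksat M w \<sigma> (Know X \<alpha>)" if "ksat N v \<sigma> (Know X \<alpha>)"
    by (rule ksat_Know_transfer[where R = "\<lambda>v' w'. (w', v') \<in> Z", OF _ _ that])
      (erule k_bisimulationD(3)[OF Z Know.prems], erule (1) Know.IH[THEN iffD2])
  ultimately show ?case by blast
qed simp_all

theorem theorem1:
  fixes C :: "('v1, 'a::finite, 'p::countable) smodel"
    and D :: "('v2, 'a, 'p) smodel"
    and M :: "('w1, 'a, 'p) kmodel"
    and N :: "('w2, 'a, 'p) kmodel"
    and F :: "'v1 set" and G :: "'v2 set" and w :: 'w1 and v :: 'w2
  shows "(simplicial_model C \<and> simplicial_model D \<and> F \<in> facets C \<and> G \<in> facets D \<and>
            s_bisimilar C F D G \<longrightarrow> s_lequiv TYPE('x::countable) C F D G)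
       \<and> (kripke_model M \<and> kripke_model N \<and> w \<in> worlds M \<and> v \<in> worlds N \<and>
            k_bisimilar M w N v \<longrightarrow> k_lequiv TYPE('x) M w N v)"
proof (intro conjI impI; elim conjE)
  assume "s_bisimilar C F D G"
  then obtain Z where "s_bisimulation C D Z" and "(F, G) \<in> Z"
    unfolding s_bisimilar_def by blast
  then show "s_lequiv TYPE('x) C F D G"
    unfolding s_lequiv_def by (simp add: s_bisimulation_ssat_iff)
next
  assume "k_bisimilar M w N v"
  then obtain Z where "k_bisimulation M N Z" and "(w, v) \<in> Z"
    unfolding k_bisimilar_def by blast
  then show "k_lequiv TYPE('x) M w N v"
    unfolding k_lequiv_def by (simp add: k_bisimulation_ksat_iff)
qed

end
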